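(* Let $G=(V,E)$ be a simple, unoriented, locally finite graph with graph distance $d$, and let $x\neq x'$ be two vertices at finite distance, each of positive degree. Then for every $t\in(0,1/2]$, $$\operatorname{ric}(x,x')=\frac{\kappa^t(x,x')}{t}.$$
   Context: For a vertex $x$, $S_x$ is the set of neighbours of $x$, $d_x=|S_x|$, and $d$ is the graph distance (length of a shortest edge path). The lazy random walk $\mu^t_x$ is the probability measure with $\mu^t_x(x)=1-t$, $\mu^t_x(y)=t/d_x$ for $y\in S_x$, and $0$ elsewhere. A coupling between probability measures $\mu,\mu'$ on $V$ is a nonnegative function $\xi$ on $V\times V$ with marginals $\mu$ and $\mu'$. The Wasserstein distance is $W_1(\mu,\mu')=\inf_\xi\sum_{y,y'}\xi(y,y')d(y,y')$, the infimum over all couplings. Set $\kappa^t(x,x')=1-\frac{W_1(\mu^t_x,\mu^t_{x'})}{d(x,x')}$ and define the (asymptotic) Ollivier–Ricci curvature $\operatorname{ric}(x,x')=\liminf_{t\to0^+}\kappa^t(x,x')/t$. *)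

theory Defs
  imports "HOL-Analysis.Analysis"
begin

definition simple_graph :: "('a \<Rightarrow> 'a \<Rightarrow> bool) \<Rightarrow> bool" where
  "simple_graph E \<longleftrightarrow> (\<forall>x. \<not> E x x) \<and> (\<forall>x y. E x y \<longrightarrow> E y x)"

definition nbhd :: "('a \<Rightarrow> 'a \<Rightarrow> bool) \<Rightarrow> 'a \<Rightarrow> 'a set" where
  "nbhd E x = {y. E x y}"

definition locally_finite :: "('a \<Rightarrow> 'a \<Rightarrow> bool) \<Rightarrow> bool" where
  "locally_finite E \<longleftrightarrow> (\<forall>x. finite (nbhd E x))"

definition deg :: "('a \<Rightarrow> 'a \<Rightarrow> bool) \<Rightarrow> 'a \<Rightarrow> nat" where
  "deg E x = card (nbhd E x)"

definition walk_of_length :: "('a \<Rightarrow> 'a \<Rightarrow> bool) \<Rightarrow> 'a \<Rightarrow> 'a \<Rightarrow> nat \<Rightarrow> bool" where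
  "walk_of_length E x y n \<longleftrightarrow>
     (\<exists>p. length p = Suc n \<and> p ! 0 = x \<and> p ! n = y \<and> (\<forall>i<n. E (p ! i) (p ! Suc i)))"

text \<open>Graph distance (only meaningful for vertices at finite distance).\<close>
definition gdist :: "('a \<Rightarrow> 'a \<Rightarrow> bool) \<Rightarrow> 'a \<Rightarrow> 'a \<Rightarrow> nat" where
  "gdist E x y = (LEAST n. walk_of_length E x y n)"

definition finite_distance :: "('a \<Rightarrow> 'a \<Rightarrow> bool) \<Rightarrow> 'a \<Rightarrow> 'a \<Rightarrow> bool" where
  "finite_distance E x y \<longleftrightarrow> (\<exists>n. walk_of_length E x y n)"

definition lazy_rw :: "('a \<Rightarrow> 'a \<Rightarrow> bool) \<Rightarrow> real \<Rightarrow> 'a \<Rightarrow> 'a \<Rightarrow> real" where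
  "lazy_rw E t x y = (if y = x then 1 - t else if E x y then t / real (deg E x) else 0)"

definition coupling :: "('a \<Rightarrow> real) \<Rightarrow> ('a \<Rightarrow> real) \<Rightarrow> ('a \<times> 'a \<Rightarrow> real) \<Rightarrow> bool" where
  "coupling \<mu> \<mu>' \<xi> \<longleftrightarrow> (\<forall>p. \<xi> p \<ge> 0)
     \<and> (\<forall>y. ((\<lambda>y'. \<xi> (y, y')) has_sum \<mu> y) UNIV)
     \<and> (\<forall>y'. ((\<lambda>y. \<xi> (y, y')) has_sum \<mu>' y') UNIV)"

definition transport_cost :: "('a \<Rightarrow> 'a \<Rightarrow> bool) \<Rightarrow> ('a \<times> 'a \<Rightarrow> real) \<Rightarrow> real" where
  "transport_cost E \<xi> = (\<Sum>\<^sub>\<infinity>(y, y')\<in>UNIV. \<xi> (y, y') * real (gdist E y y'))"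

definition W1 :: "('a \<Rightarrow> 'a \<Rightarrow> bool) \<Rightarrow> ('a \<Rightarrow> real) \<Rightarrow> ('a \<Rightarrow> real) \<Rightarrow> real" where
  "W1 E \<mu> \<mu>' = Inf (transport_cost E ` {\<xi>. coupling \<mu> \<mu>' \<xi>})"

definition kappa :: "('a \<Rightarrow> 'a \<Rightarrow> bool) \<Rightarrow> real \<Rightarrow> 'a \<Rightarrow> 'a \<Rightarrow> real" where
  "kappa E t x x' = 1 - W1 E (lazy_rw E t x) (lazy_rw E t x') / real (gdist E x x')"

definition ric :: "('a \<Rightarrow> 'a \<Rightarrow> bool) \<Rightarrow> 'a \<Rightarrow> 'a \<Rightarrow> ereal" where
  "ric E x x' = Liminf (at_right 0) (\<lambda>t. ereal (kappa E t x x' / t))"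

end

theory Submission
  imports Defs
begin

text \<open>Write \<open>W\<^sub>t\<close> for the transport distance between \<open>\<mu>\<^sup>t\<^sub>x\<close> and \<open>\<mu>\<^sup>t\<^sub>x\<^sub>'\<close>. For
  \<open>0 < s \<le> t\<close> the walk \<open>\<mu>\<^sup>s\<^sub>x\<close> is the mixture \<open>(s/t) \<mu>\<^sup>t\<^sub>x + (1 - s/t) \<delta>\<^sub>x\<close>, and mixing a
  coupling of the \<open>t\<close>-walks in the same way with the point mass at \<open>(x, x')\<close> yields a
  coupling of the \<open>s\<close>-walks; hence \<open>W\<^sub>s \<le> (s/t) W\<^sub>t + (1 - s/t) d(x, x')\<close>. Conversely, when
  \<open>t \<le> 1/2\<close> every coupling of the \<open>s\<close>-walks puts mass at least \<open>1 - 2s \<ge> 1 - s/t\<close> on \<open>(x, x')\<close>,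
  so its mixture with the weight \<open>t/s > 1\<close> is still nonnegative and couples the \<open>t\<close>-walks,
  which gives the reverse inequality. Hence \<open>(W\<^sub>t - d(x, x'))/t\<close>, and with it \<open>\<kappa>\<^sup>t/t\<close>, is
  constant on \<open>(0, 1/2]\<close> and equals its lim inf at \<open>0\<close>.\<close>

lemma coupling_nonneg: "coupling \<mu> \<nu> \<xi> \<Longrightarrow> 0 \<le> \<xi> p"
  by (cases p) (simp add: coupling_def)

lemma coupling_has_sum_fst: "coupling \<mu> \<nu> \<xi> \<Longrightarrow> ((\<lambda>y'. \<xi> (y, y')) has_sum \<mu> y) UNIV"
  by (simp add: coupling_def)

lemma coupling_has_sum_snd: "coupling \<mu> \<nu> \<xi> \<Longrightarrow> ((\<lambda>y. \<xi> (y, y')) has_sum \<nu> y') UNIV"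
  by (simp add: coupling_def)

lemma coupling_le_fst:
  assumes "coupling \<mu> \<nu> \<xi>"
  shows "\<xi> (y, y') \<le> \<mu> y"
  using has_sum_mono2[OF has_sum_finiteI coupling_has_sum_fst[OF assms], of "{y'}"]
    coupling_nonneg[OF assms] by simp

lemma coupling_le_snd:
  assumes "coupling \<mu> \<nu> \<xi>"
  shows "\<xi> (y, y') \<le> \<nu> y'"
  using has_sum_mono2[OF has_sum_finiteI coupling_has_sum_snd[OF assms], of "{y}"]
    coupling_nonneg[OF assms] by simp

lemma coupling_support_subset:
  assumes "coupling \<mu> \<nu> \<xi>"
  shows "{p. \<xi> p \<noteq> 0} \<subseteq> {y. \<mu> y \<noteq> 0} \<times> {y'. \<nu> y' \<noteq> 0}"
proof -
  have "\<mu> y \<noteq> 0 \<and> \<nu> y' \<noteq> 0" if "\<xi> (y, y') \<noteq> 0" for y y'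
    using that coupling_nonneg[OF assms, of "(y, y')"]
      coupling_le_fst[OF assms, of y y'] coupling_le_snd[OF assms, of y y'] by auto
  then show ?thesis by auto
qed

lemma coupling_lower_bound:
  assumes "coupling \<mu> \<nu> \<xi>" "(\<nu> has_sum 1) UNIV"
  shows "\<mu> y + \<nu> y' - 1 \<le> \<xi> (y, y')"
proof -
  have "((\<lambda>z. \<xi> (y, z)) has_sum (\<mu> y - \<xi> (y, y'))) (UNIV - {y'})"
    by (rule has_sum_Diff[OF coupling_has_sum_fst[OF assms(1)] has_sum_finiteI]) auto
  moreover have "(\<nu> has_sum (1 - \<nu> y')) (UNIV - {y'})"
    by (rule has_sum_Diff[OF assms(2) has_sum_finiteI]) auto
  ultimately have "\<mu> y - \<xi> (y, y') \<le> 1 - \<nu> y'"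
    by (rule has_sum_mono) (rule coupling_le_snd[OF assms(1)])
  then show ?thesis by simp
qed

lemma coupling_product:
  assumes "\<And>y. 0 \<le> \<mu> y" "\<And>y. 0 \<le> \<nu> y" "(\<mu> has_sum 1) UNIV" "(\<nu> has_sum 1) UNIV"
  shows "coupling \<mu> \<nu> (\<lambda>(y, y'). \<mu> y * \<nu> y')"
  unfolding coupling_def
  using assms has_sum_cmult_right[OF assms(4)] has_sum_cmult_left[OF assms(3)]
  by auto

definition dirac_mix :: "real \<Rightarrow> ('b \<Rightarrow> real) \<Rightarrow> 'b \<Rightarrow> 'b \<Rightarrow> real" where
  "dirac_mix a \<mu> x = (\<lambda>y. a * \<mu> y + (1 - a) * indicator {x} y)"

lemma coupling_dirac_mix:
  assumes "coupling \<mu> \<nu> \<xi>" "\<And>p. 0 \<le> dirac_mix a \<xi> (x, x') p"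
  shows "coupling (dirac_mix a \<mu> x) (dirac_mix a \<nu> x') (dirac_mix a \<xi> (x, x'))"
  unfolding coupling_def
proof (intro conjI allI)
  fix y
  have "((\<lambda>y'. indicator {(x, x')} (y, y')) has_sum (indicator {x} y :: real)) UNIV"
    by (rule has_sum_finite_neutralI[where B="{x'}"]) (auto split: split_indicator)
  from has_sum_add[OF has_sum_cmult_right[OF coupling_has_sum_fst[OF assms(1)]]
      has_sum_cmult_right[OF this]]
  show "((\<lambda>y'. dirac_mix a \<xi> (x, x') (y, y')) has_sum dirac_mix a \<mu> x y) UNIV"
    by (simp add: dirac_mix_def)
next
  fix y'
  have "((\<lambda>y. indicator {(x, x')} (y, y')) has_sum (indicator {x'} y' :: real)) UNIV"
    by (rule has_sum_finite_neutralI[where B="{x}"]) (auto split: split_indicator)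
  from has_sum_add[OF has_sum_cmult_right[OF coupling_has_sum_snd[OF assms(1)]]
      has_sum_cmult_right[OF this]]
  show "((\<lambda>y. dirac_mix a \<xi> (x, x') (y, y')) has_sum dirac_mix a \<nu> x' y') UNIV"
    by (simp add: dirac_mix_def)
qed (use assms(2) in auto)

lemma transport_cost_nonneg: "(\<And>p. 0 \<le> \<xi> p) \<Longrightarrow> 0 \<le> transport_cost E \<xi>"
  unfolding transport_cost_def by (auto intro!: infsum_nonneg)

lemma W1_le_transport_cost:
  assumes "coupling \<mu> \<nu> \<xi>"
  shows "W1 E \<mu> \<nu> \<le> transport_cost E \<xi>"
  unfolding W1_def using assms transport_cost_nonneg[OF coupling_nonneg]
  by (intro cInf_lower bdd_belowI2) auto

lemma W1_greatest:
  assumes "coupling \<mu> \<nu> \<xi>\<^sub>0" "\<And>\<xi>. coupling \<mu> \<nu> \<xi> \<Longrightarrow> c \<le> transport_cost E \<xi>"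
  shows "c \<le> W1 E \<mu> \<nu>"
  unfolding W1_def using assms by (intro cInf_greatest) auto

lemma transport_cost_has_sum:
  assumes "finite {p. \<xi> p \<noteq> 0}"
  shows "((\<lambda>(y, y'). \<xi> (y, y') * real (gdist E y y')) has_sum transport_cost E \<xi>) UNIV"
proof -
  have "(\<lambda>(y, y'). \<xi> (y, y') * real (gdist E y y')) summable_on UNIV"
    by (rule summable_on_cong_neutral[where S="{p. \<xi> p \<noteq> 0}", THEN iffD1])
       (use assms in auto)
  then show ?thesis unfolding transport_cost_def by simp
qed

lemma transport_cost_dirac_mix:
  assumes "finite {p. \<xi> p \<noteq> 0}"
  shows "transport_cost E (dirac_mix a \<xi> (x, x'))
           = a * transport_cost E \<xi> + (1 - a) * real (gdist E x x')"
proof -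
  have "((\<lambda>(y, y'). indicator {(x, x')} (y, y') * real (gdist E y y')) has_sum real (gdist E x x')) UNIV"
    by (rule has_sum_finite_neutralI[where B="{(x, x')}"]) (auto simp: indicator_def)
  from has_sum_add[OF has_sum_cmult_right[OF transport_cost_has_sum[OF assms]]
      has_sum_cmult_right[OF this]]
  show ?thesis
    unfolding transport_cost_def[of E "dirac_mix _ _ _"]
    by (intro infsumI) (simp add: dirac_mix_def case_prod_unfold distrib_right mult.assoc)
qed

lemma W1_dirac_mix_le:
  assumes a: "0 < a" and fin: "finite {y. \<mu> y \<noteq> 0}" "finite {y. \<nu> y \<noteq> 0}"
    and "coupling \<mu> \<nu> \<xi>\<^sub>0"
    and nonneg: "\<And>\<xi> p. coupling \<mu> \<nu> \<xi> \<Longrightarrow> 0 \<le> dirac_mix a \<xi> (x, x') p"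
  shows "W1 E (dirac_mix a \<mu> x) (dirac_mix a \<nu> x')
           \<le> a * W1 E \<mu> \<nu> + (1 - a) * real (gdist E x x')"
proof -
  let ?W = "W1 E (dirac_mix a \<mu> x) (dirac_mix a \<nu> x')" and ?D = "real (gdist E x x')"
  have "(?W - (1 - a) * ?D) / a \<le> transport_cost E \<xi>" if \<xi>: "coupling \<mu> \<nu> \<xi>" for \<xi>
  proof -
    have "finite {p. \<xi> p \<noteq> 0}"
      using finite_subset[OF coupling_support_subset[OF \<xi>] finite_cartesian_product[OF fin]] .
    have "?W \<le> transport_cost E (dirac_mix a \<xi> (x, x'))"
      by (rule W1_le_transport_cost[OF coupling_dirac_mix[OF \<xi> nonneg[OF \<xi>]]])
    also have "\<dots> = a * transport_cost E \<xi> + (1 - a) * ?D"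
      by (rule transport_cost_dirac_mix) fact
    finally show ?thesis using a by (simp add: field_simps)
  qed
  then have "(?W - (1 - a) * ?D) / a \<le> W1 E \<mu> \<nu>"
    by (rule W1_greatest[OF assms(4)])
  then show ?thesis using a by (simp add: field_simps)
qed

lemma lazy_rw_nonneg: "0 \<le> t \<Longrightarrow> t \<le> 1 \<Longrightarrow> 0 \<le> lazy_rw E t x y"
  by (simp add: lazy_rw_def)

lemma lazy_rw_self: "lazy_rw E t x x = 1 - t"
  by (simp add: lazy_rw_def)

lemma lazy_rw_finite_support:
  "finite (nbhd E x) \<Longrightarrow> finite {y. lazy_rw E t x y \<noteq> 0}"
  by (rule finite_subset[of _ "insert x (nbhd E x)"]) (auto simp: lazy_rw_def nbhd_def)

lemma lazy_rw_has_sum: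
  assumes "simple_graph E" "finite (nbhd E x)" "deg E x > 0"
  shows "(lazy_rw E t x has_sum 1) UNIV"
proof (rule has_sum_finite_neutralI[where B="insert x (nbhd E x)"])
  have x: "x \<notin> nbhd E x" using assms(1) by (simp add: simple_graph_def nbhd_def)
  have "(\<Sum>y\<in>nbhd E x. lazy_rw E t x y) = (\<Sum>y\<in>nbhd E x. t / real (deg E x))"
    using x by (intro sum.cong) (auto simp: lazy_rw_def nbhd_def)
  also have "\<dots> = t" using assms(3) by (simp add: deg_def)
  finally show "1 = (\<Sum>y\<in>insert x (nbhd E x). lazy_rw E t x y)"
    using x assms(2) by (simp add: lazy_rw_self)
qed (use assms(2) in \<open>auto simp: lazy_rw_def nbhd_def\<close>)

lemma lazy_rw_eq_dirac_mix: "0 < t \<Longrightarrow> lazy_rw E s x = dirac_mix (s / t) (lazy_rw E t x) x"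
  by (auto simp: lazy_rw_def dirac_mix_def field_simps)

lemma W1_lazy_rw_excess_linear:
  assumes G: "simple_graph E" "locally_finite E"
    and deg: "deg E x > 0" "deg E x' > 0"
    and st: "0 < s" "s \<le> t" "t \<le> 1/2"
  shows "(W1 E (lazy_rw E s x) (lazy_rw E s x') - real (gdist E x x')) / s
       = (W1 E (lazy_rw E t x) (lazy_rw E t x') - real (gdist E x x')) / t"
proof -
  define W where "W r = W1 E (lazy_rw E r x) (lazy_rw E r x')" for r
  define D where "D = real (gdist E x x')"
  have total: "(lazy_rw E r z has_sum 1) UNIV" if "z \<in> {x, x'}" for r z
    using that deg G by (auto intro!: lazy_rw_has_sum simp: locally_finite_def)
  have fin: "finite {y. lazy_rw E r z y \<noteq> 0}" for r z
    using G(2) by (simp add: lazy_rw_finite_support locally_finite_def)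
  have product: "coupling (lazy_rw E r x) (lazy_rw E r x')
                   (\<lambda>(y, y'). lazy_rw E r x y * lazy_rw E r x' y')" if "0 \<le> r" "r \<le> 1" for r
    using that total by (intro coupling_product lazy_rw_nonneg) auto
  have mix_s: "lazy_rw E s z = dirac_mix (s/t) (lazy_rw E t z) z" for z
    using st by (intro lazy_rw_eq_dirac_mix) auto
  have mix_t: "lazy_rw E t z = dirac_mix (t/s) (lazy_rw E s z) z" for z
    using st by (intro lazy_rw_eq_dirac_mix) auto
  have "W s \<le> (s/t) * W t + (1 - s/t) * D" (is "_ \<le> ?R")
    unfolding W_def D_def mix_s
  proof (intro W1_dirac_mix_le[OF _ fin fin product])
    fix \<xi> p assume "coupling (lazy_rw E t x) (lazy_rw E t x') \<xi>"
    then show "0 \<le> dirac_mix (s/t) \<xi> (x, x') p"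
      using st coupling_nonneg[of _ _ \<xi> p] by (simp add: dirac_mix_def)
  qed (use st in auto)
  then have "t * W s \<le> t * ?R" using st by (intro mult_left_mono) auto
  then have upper_s: "t * W s \<le> s * W t + (t - s) * D"
    using st by (simp add: algebra_simps)
  have "W t \<le> (t/s) * W s + (1 - t/s) * D" (is "_ \<le> ?R")
    unfolding W_def D_def mix_t
  proof (intro W1_dirac_mix_le[OF _ fin fin product])
    fix \<xi> p assume \<xi>: "coupling (lazy_rw E s x) (lazy_rw E s x') \<xi>"
    show "0 \<le> dirac_mix (t/s) \<xi> (x, x') p"
    proof (cases "p = (x, x')")
      case True
      have "1 - 2 * s \<le> \<xi> (x, x')"
        using coupling_lower_bound[OF \<xi> total[of x'], of x x'] by (simp add: lazy_rw_self)
      then have "t * (1 - 2 * s) \<le> t * \<xi> (x, x')" using st by (intro mult_left_mono) auto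
      moreover have "s * (2 * t) \<le> s * 1" using st by (intro mult_left_mono) auto
      ultimately have "0 \<le> t * \<xi> (x, x') + s - t" by (simp add: algebra_simps)
      then show ?thesis using True st by (simp add: dirac_mix_def field_simps)
    qed (use st coupling_nonneg[OF \<xi>] in \<open>simp add: dirac_mix_def\<close>)
  qed (use st in auto)
  then have "s * W t \<le> s * ?R" using st by (intro mult_left_mono) auto
  then have upper_t: "s * W t \<le> t * W s + (s - t) * D"
    using st by (simp add: algebra_simps)
  have "t * (W s - D) = s * (W t - D)"
    using upper_s upper_t by (simp add: algebra_simps)
  then show ?thesis using st by (simp add: W_def D_def frac_eq_eq mult.commute)
qed

lemma gdist_pos:
  assumes "x \<noteq> x'" "finite_distance E x x'"
  shows "gdist E x x' > 0"
proof -
  obtain n where "walk_of_length E x x' n" using assms(2) by (auto simp: finite_distance_def)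
  then have "walk_of_length E x x' (gdist E x x')" unfolding gdist_def by (rule LeastI)
  moreover have "\<not> walk_of_length E x x' 0" using assms(1) by (auto simp: walk_of_length_def)
  ultimately show ?thesis by (cases "gdist E x x'") auto
qed

lemma kappa_div_eq:
  assumes G: "simple_graph E" "locally_finite E"
    and xx': "x \<noteq> x'" "finite_distance E x x'"
    and deg: "deg E x > 0" "deg E x' > 0"
    and st: "0 < s" "s \<le> 1/2" "0 < t" "t \<le> 1/2"
  shows "kappa E s x x' / s = kappa E t x x' / t"
proof -
  define D where "D = real (gdist E x x')"
  have "D > 0" using gdist_pos[OF xx'] by (simp add: D_def)
  then have kappa_div: "kappa E r x x' / r = - ((W1 E (lazy_rw E r x) (lazy_rw E r x') - D) / r) / D"
    if "r > 0" for r
    using that unfolding kappa_def D_def[symmetric] by (simp add: field_simps)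
  have "(W1 E (lazy_rw E s x) (lazy_rw E s x') - D) / s = (W1 E (lazy_rw E t x) (lazy_rw E t x') - D) / t"
  proof (cases "s \<le> t")
    case True
    then show ?thesis using W1_lazy_rw_excess_linear[OF G deg] st by (simp add: D_def)
  next
    case False
    then show ?thesis using W1_lazy_rw_excess_linear[OF G deg, of t s] st by (simp add: D_def)
  qed
  then show ?thesis using st by (simp add: kappa_div)
qed

theorem proposition1:
  fixes E :: "'a \<Rightarrow> 'a \<Rightarrow> bool" and x x' :: 'a and t :: real
  assumes "simple_graph E" and "locally_finite E"
    and "x \<noteq> x'" and "finite_distance E x x'"
    and "deg E x > 0" and "deg E x' > 0"
    and "0 < t" and "t \<le> 1/2"
  shows "ric E x x' = ereal (kappa E t x x' / t)"
proof -
  have const: "\<forall>\<^sub>F s in at_right 0. ereal (kappa E s x x' / s) = ereal (kappa E t x x' / t)"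
    by (rule eventually_mono[OF eventually_at_right_real[of 0 "1/2 :: real"]])
       (use kappa_div_eq[OF assms(1-6) _ _ assms(7,8)] in auto)
  have "ric E x x' = Liminf (at_right 0) (\<lambda>_ :: real. ereal (kappa E t x x' / t))"
    unfolding ric_def by (rule Liminf_eq[OF const])
  also have "\<dots> = ereal (kappa E t x x' / t)"
    by (simp add: Liminf_const)
  finally show ?thesis .
qed

end
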